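(* Let $\mathcal P_1$ and $\mathcal P_2$ be two pairs of lines in the plane, the lines of $\mathcal P_1$ intersecting at ${\bf a}$ and those of $\mathcal P_2$ intersecting at ${\bf b}$, and let $A$ and $B$ be the cone matrices of the HR-cones generated by $\mathcal P_1$ and $\mathcal P_2$, respectively. Let $C=A-B$ and ${\bf c}=A{\bf a}-B{\bf b}$. If $A\neq B$, then $C$ is invertible and the rectangle locus for $\mathcal P_1$ and $\mathcal P_2$ is the set of all ${\bf x}\in\mathbb{R}^2$ such that $$({\bf x}-C^{-1}{\bf c})^TC({\bf x}-C^{-1}{\bf c})={\bf c}^TC^{-1}{\bf c}-{\bf a}^TA{\bf a}+{\bf b}^TB{\bf b}.$$
   Context: A pair of lines means two distinct lines; two pairs of lines are distinct pairs, possibly sharing one line. For a pair of distinct intersecting lines, the subset of $\mathbb{R}^3$ they generate (the set of $(x,y,\pm z)$ with $2z$ the length of a segment joining the two lines with midpoint $(x,y)$) is an HR-cone $\{(x,y,z): z^2=({\bf x}-{\bf a})^TA({\bf x}-{\bf a})\}$ with $A$ symmetric positive definite, $\det A=1$, and ${\bf a}$ the crossing point; $A$ is its cone matrix. The rectangle locus of two pairs $L_1,L_3$ and $L_2,L_4$ is the set of points $p$ that are the midpoint both of a segment joining $L_1$ and $L_3$ and of a segment joining $L_2$ and $L_4$, these two segments having equal length (equivalently, centers of possibly degenerate rectangles whose diagonals join the lines of the respective pairs). *)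

theory Defs
  imports "HOL-Analysis.Analysis"
begin

type_synonym pt = "real^2"

definition is_line :: "pt set \<Rightarrow> bool" where
  "is_line L \<longleftrightarrow> (\<exists>p d. d \<noteq> 0 \<and> L = {p + t *\<^sub>R d | t. True})"

definition crossing_pair :: "pt set \<Rightarrow> pt set \<Rightarrow> pt \<Rightarrow> bool" where
  "crossing_pair L M a \<longleftrightarrow> is_line L \<and> is_line M \<and> L \<noteq> M \<and> a \<in> L \<and> a \<in> M"

text \<open>The subset of R^3 = R^2 x R generated by a pair of lines:
  points (x, +-z) with 2z the length of a segment joining the lines with midpoint x.\<close>
definition generated_set :: "pt set \<Rightarrow> pt set \<Rightarrow> (pt \<times> real) set" where
  "generated_set L M = {(x, z) | x z. \<exists>p\<in>L. \<exists>q\<in>M. x = midpoint p q \<and> 2 * \<bar>z\<bar> = dist p q}"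

definition hr_cone :: "real^2^2 \<Rightarrow> pt \<Rightarrow> (pt \<times> real) set" where
  "hr_cone A a = {(x, z). z\<^sup>2 = (x - a) \<bullet> (A *v (x - a))}"

definition cone_matrix_ok :: "real^2^2 \<Rightarrow> bool" where
  "cone_matrix_ok A \<longleftrightarrow> transpose A = A \<and> (\<forall>v. v \<noteq> 0 \<longrightarrow> v \<bullet> (A *v v) > 0) \<and> det A = 1"

definition is_cone_matrix :: "pt set \<Rightarrow> pt set \<Rightarrow> pt \<Rightarrow> real^2^2 \<Rightarrow> bool" where
  "is_cone_matrix L M a A \<longleftrightarrow> cone_matrix_ok A \<and> generated_set L M = hr_cone A a"

definition rectangle_locus :: "pt set \<Rightarrow> pt set \<Rightarrow> pt set \<Rightarrow> pt set \<Rightarrow> pt set" where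
  "rectangle_locus L1 L3 L2 L4 =
     {p. \<exists>p1\<in>L1. \<exists>p3\<in>L3. \<exists>p2\<in>L2. \<exists>p4\<in>L4.
          p = midpoint p1 p3 \<and> p = midpoint p2 p4 \<and> dist p1 p3 = dist p2 p4}"

end

theory Submission
  imports Defs
begin

(*
  A point x lies in the rectangle locus iff some half-length z is realised over x by both pairs,
  i.e. iff the two HR-cones meet over x; as both cone matrices are positive definite this means
  (x - a)^T A (x - a) = (x - b)^T B (x - b). The quadratic parts differ by C = A - B, so completing
  the square around C^-1 c gives the stated conic. C is invertible because for symmetric 2x2
  matrices of equal determinant d > 0 with leading entries p = A11, s = B11 one has
  p s det (A - B) = -(d (p - s)^2 + (p B12 - s A12)^2), which is negative unless A = B.
*)

lemma det_diff_negative_2x2: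
  fixes A B :: "real^2^2"
  assumes symA: "transpose A = A" and symB: "transpose B = B"
    and posA: "A$1$1 > 0" and posB: "B$1$1 > 0"
    and det_eq: "det A = det B" and det_pos: "det A > 0" and "A \<noteq> B"
  shows "det (A - B) < 0"
proof -
  define p q r s t u d where entries: "p = A$1$1" "q = A$1$2" "r = A$2$2"
    "s = B$1$1" "t = B$1$2" "u = B$2$2" "d = det A"
  have "A$2$1 = q" "B$2$1 = t"
    using arg_cong[OF symA, of "\<lambda>M. M$1$2"] arg_cong[OF symB, of "\<lambda>M. M$1$2"]
    by (simp_all add: transpose_def entries)
  then have dA: "p * r - q^2 = d" and dB: "s * u - t^2 = d"
    and dC: "det (A - B) = (p - s) * (r - u) - (q - t)^2"
    using det_eq by (simp_all add: det_2 entries power2_eq_square)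
  have "p * s * det (A - B) + (d * (p - s)^2 + (p * t - s * q)^2)
      = (p * s - s^2) * (p * r - q^2 - d) + (p * s - p^2) * (s * u - t^2 - d)"
    unfolding dC by (simp add: algebra_simps power2_eq_square)
  also have "\<dots> = 0" using dA dB by simp
  finally have sum_of_squares: "p * s * det (A - B) = - (d * (p - s)^2 + (p * t - s * q)^2)"
    by linarith
  have "p \<noteq> s \<or> p * t \<noteq> s * q"
  proof (rule ccontr)
    assume "\<not> ?thesis"
    then have "p = s" "q = t" using posA by (auto simp: entries)
    moreover from this have "p * r - q^2 = p * u - q^2" using dA dB by metis
    then have "r = u" using posA by (simp add: entries)
    ultimately show False
      using \<open>A \<noteq> B\<close> \<open>A$2$1 = q\<close> \<open>B$2$1 = t\<close>
      by (auto simp: vec_eq_iff forall_2 entries)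
  qed
  moreover have "d > 0" using det_pos by (simp add: entries)
  ultimately have "d * (p - s)^2 > 0 \<or> (p * t - s * q)^2 > 0"
    by (metis eq_iff_diff_eq_0 mult_pos_pos zero_less_power2)
  with \<open>d > 0\<close> have "d * (p - s)^2 + (p * t - s * q)^2 > 0"
    by (metis add_nonneg_pos add_pos_nonneg less_imp_le mult_nonneg_nonneg zero_le_power2)
  then have "p * s * det (A - B) < 0" by (simp add: sum_of_squares)
  moreover have "p * s > 0" using posA posB by (simp add: entries)
  ultimately show ?thesis using mult_less_cancel_left_pos[of "p * s" "det (A - B)" 0] by simp
qed

lemma cone_matrix_ok_det_diff_negative:
  assumes "cone_matrix_ok A" and "cone_matrix_ok B" and "A \<noteq> B"
  shows "det (A - B) < 0"
proof (rule det_diff_negative_2x2)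
  have "M$1$1 > 0" if "cone_matrix_ok M" for M :: "real^2^2"
  proof -
    have "axis 1 1 \<bullet> (M *v axis 1 1) > 0"
      using that by (simp add: cone_matrix_ok_def axis_eq_0_iff)
    then show ?thesis by (simp add: inner_vec_def sum_2 matrix_vector_mult_def axis_def)
  qed
  then show "A$1$1 > 0" "B$1$1 > 0" using assms by blast+
qed (use assms in \<open>simp_all add: cone_matrix_ok_def\<close>)

lemma cone_matrix_ok_quadratic_nonneg:
  assumes "cone_matrix_ok A"
  shows "0 \<le> v \<bullet> (A *v v)"
  using assms by (cases "v = 0") (auto simp: cone_matrix_ok_def less_imp_le)

lemma midpoint_dist_iff_hr_cone:
  assumes "generated_set L M = hr_cone A a"
  shows "(\<exists>p\<in>L. \<exists>q\<in>M. x = midpoint p q \<and> dist p q = 2 * z)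
    \<longleftrightarrow> 0 \<le> z \<and> z\<^sup>2 = (x - a) \<bullet> (A *v (x - a))"
proof -
  have "(\<exists>p\<in>L. \<exists>q\<in>M. x = midpoint p q \<and> dist p q = 2 * z)
      \<longleftrightarrow> 0 \<le> z \<and> (\<exists>p\<in>L. \<exists>q\<in>M. x = midpoint p q \<and> 2 * \<bar>z\<bar> = dist p q)"
  proof (cases "0 \<le> z")
    case True
    then show ?thesis by (metis abs_of_nonneg)
  next
    case False
    then show ?thesis by (smt (verit) zero_le_dist)
  qed
  moreover have "(x, z) \<in> generated_set L M
      \<longleftrightarrow> (\<exists>p\<in>L. \<exists>q\<in>M. x = midpoint p q \<and> 2 * \<bar>z\<bar> = dist p q)"
    by (simp add: generated_set_def)
  ultimately show ?thesis using assms by (simp add: hr_cone_def)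
qed

lemma rectangle_locus_eq_quadric_difference:
  assumes "is_cone_matrix L1 L3 a A" and "is_cone_matrix L2 L4 b B"
  shows "rectangle_locus L1 L3 L2 L4 = {x. (x - a) \<bullet> (A *v (x - a)) = (x - b) \<bullet> (B *v (x - b))}"
proof -
  have gen: "generated_set L1 L3 = hr_cone A a" "generated_set L2 L4 = hr_cone B b"
    and "cone_matrix_ok A" using assms by (simp_all add: is_cone_matrix_def)
  have "x \<in> rectangle_locus L1 L3 L2 L4 \<longleftrightarrow>
      (\<exists>z. (\<exists>p\<in>L1. \<exists>q\<in>L3. x = midpoint p q \<and> dist p q = 2 * z)
         \<and> (\<exists>p\<in>L2. \<exists>q\<in>L4. x = midpoint p q \<and> dist p q = 2 * z))" for x
    unfolding rectangle_locus_def mem_Collect_eq by (metis field_sum_of_halves mult_2)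
  also have "\<dots> x \<longleftrightarrow> (\<exists>z\<ge>0. z\<^sup>2 = (x - a) \<bullet> (A *v (x - a)) \<and> z\<^sup>2 = (x - b) \<bullet> (B *v (x - b)))" for x
    by (auto simp: midpoint_dist_iff_hr_cone[OF gen(1)] midpoint_dist_iff_hr_cone[OF gen(2)])
  also have "\<dots> x \<longleftrightarrow> (x - a) \<bullet> (A *v (x - a)) = (x - b) \<bullet> (B *v (x - b))" for x
    using cone_matrix_ok_quadratic_nonneg[OF \<open>cone_matrix_ok A\<close>, of "x - a"]
    by (metis real_sqrt_ge_0_iff real_sqrt_pow2)
  finally show ?thesis by blast
qed

lemma inner_matrix_vector_sym:
  fixes M :: "real^'n^'n"
  assumes "transpose M = M"
  shows "y \<bullet> (M *v x) = x \<bullet> (M *v y)"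
  by (metis assms dot_lmul_matrix inner_commute vector_transpose_matrix)

lemma quadratic_form_diff:
  fixes M :: "real^'n^'n"
  assumes "transpose M = M"
  shows "(x - y) \<bullet> (M *v (x - y)) = x \<bullet> (M *v x) - 2 * (x \<bullet> (M *v y)) + y \<bullet> (M *v y)"
  using inner_matrix_vector_sym[OF assms, of y x]
  by (simp add: matrix_vector_mult_diff_distrib inner_diff_left inner_diff_right)

lemma equal_quadrics_iff_centered_quadric:
  fixes A B :: "real^'n^'n"
  assumes "transpose A = A" and "transpose B = B" and "(A - B) *v m = A *v a - B *v b"
  shows "(x - a) \<bullet> (A *v (x - a)) = (x - b) \<bullet> (B *v (x - b))
    \<longleftrightarrow> (x - m) \<bullet> ((A - B) *v (x - m)) = (A *v a - B *v b) \<bullet> m - a \<bullet> (A *v a) + b \<bullet> (B *v b)"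
proof -
  have "transpose (A - B) = A - B" using assms(1,2) by (simp add: transpose_def vec_eq_iff)
  then have "(x - m) \<bullet> ((A - B) *v (x - m))
      = x \<bullet> ((A - B) *v x) - 2 * (x \<bullet> (A *v a - B *v b)) + (A *v a - B *v b) \<bullet> m"
    using assms(3) by (simp add: quadratic_form_diff inner_commute)
  moreover have "x \<bullet> ((A - B) *v x) = x \<bullet> (A *v x) - x \<bullet> (B *v x)"
    by (simp add: matrix_vector_mult_diff_rdistrib inner_diff_right)
  ultimately show ?thesis
    by (simp add: quadratic_form_diff assms(1,2) inner_diff_right) linarith
qed

lemma matrix_inv_right_vector:
  fixes M :: "real^'n^'n"
  assumes "invertible M"
  shows "M *v (matrix_inv M *v c) = c"
proof -
  have "M ** matrix_inv M = mat 1"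
    using assms unfolding invertible_def matrix_inv_def by (rule someI_ex[THEN conjunct1])
  then show ?thesis by (metis matrix_vector_mul_assoc matrix_vector_mul_lid)
qed

theorem lemma4p5:
  fixes L1 L3 L2 L4 :: "(real^2) set" and a b :: "real^2" and A B :: "real^2^2"
  assumes "crossing_pair L1 L3 a" and "crossing_pair L2 L4 b"
    and "is_cone_matrix L1 L3 a A" and "is_cone_matrix L2 L4 b B"
    and "A \<noteq> B"
  shows "invertible (A - B) \<and>
    rectangle_locus L1 L3 L2 L4 =
      {x. (x - matrix_inv (A - B) *v (A *v a - B *v b)) \<bullet>
            ((A - B) *v (x - matrix_inv (A - B) *v (A *v a - B *v b)))
          = (A *v a - B *v b) \<bullet> (matrix_inv (A - B) *v (A *v a - B *v b))
            - a \<bullet> (A *v a) + b \<bullet> (B *v b)}"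
proof -
  have okA: "cone_matrix_ok A" and okB: "cone_matrix_ok B"
    using assms(3,4) by (simp_all add: is_cone_matrix_def)
  have inv: "invertible (A - B)"
    using cone_matrix_ok_det_diff_negative[OF okA okB \<open>A \<noteq> B\<close>] by (simp add: invertible_det_nz)
  have sym: "transpose A = A" "transpose B = B"
    using okA okB by (simp_all add: cone_matrix_ok_def)
  have "(A - B) *v (matrix_inv (A - B) *v (A *v a - B *v b)) = A *v a - B *v b"
    using matrix_inv_right_vector[OF inv] .
  with inv show ?thesis
    by (simp add: rectangle_locus_eq_quadric_difference[OF assms(3,4)]
        equal_quadrics_iff_centered_quadric[OF sym])
qed

end
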